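(* Let $E$ be a finite directed graph satisfying Condition (EXC) and having no sources and no sinks. Then $\mathrm{h}_{\mathrm{alg}}(KE)=0$.
   Context: For a finite directed graph $E=(E^0,E^1,s,r)$: a sink is a vertex $v$ with $s^{-1}(v)=\emptyset$, a source a vertex with $r^{-1}(v)=\emptyset$. A cycle is a path $e_1\cdots e_n$ ($n\ge1$) with $s(e_1)=r(e_n)$ and $s(e_i)\neq s(e_j)$ for $i\neq j$. $E$ satisfies Condition (EXC) if every cycle is exclusive, i.e.\ no vertex of a cycle $C$ lies on a cycle other than a rotation of $C$. The path algebra $KE$ has basis all paths with concatenation product; standard filtration $V_n=$ span of paths of length $\le n$; $\mathrm{h}_{\mathrm{alg}}(KE)=0$ if $KE$ is finite-dimensional and $\limsup_n\frac1n\log\dim(V_n/V_{n-1})$ otherwise. *)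

theory Defs
  imports "Graph_Theory.Digraph" "HOL-Library.Liminf_Limsup" "HOL-Library.Extended_Real"
begin

text \<open>Directed graphs E = (E0, E1, s, r) are rendered as Graph_Theory pre_digraphs:
  E0 = verts G, E1 = arcs G, s = tail G, r = head G.\<close>

definition is_epath :: "('a,'b) pre_digraph \<Rightarrow> 'b list \<Rightarrow> bool" where
  "is_epath G es \<longleftrightarrow> es \<noteq> [] \<and> set es \<subseteq> arcs G \<and>
     (\<forall>i. Suc i < length es \<longrightarrow> head G (es ! i) = tail G (es ! Suc i))"

definition is_sink :: "('a,'b) pre_digraph \<Rightarrow> 'a \<Rightarrow> bool" where
  "is_sink G v \<longleftrightarrow> v \<in> verts G \<and> {e \<in> arcs G. tail G e = v} = {}"

definition is_source :: "('a,'b) pre_digraph \<Rightarrow> 'a \<Rightarrow> bool" where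
  "is_source G v \<longleftrightarrow> v \<in> verts G \<and> {e \<in> arcs G. head G e = v} = {}"

definition is_cycle :: "('a,'b) pre_digraph \<Rightarrow> 'b list \<Rightarrow> bool" where
  "is_cycle G c \<longleftrightarrow> is_epath G c \<and> tail G (hd c) = head G (last c) \<and>
     distinct (map (tail G) c)"

definition cycle_verts :: "('a,'b) pre_digraph \<Rightarrow> 'b list \<Rightarrow> 'a set" where
  "cycle_verts G c = set (map (tail G) c)"

definition exclusive_cycle :: "('a,'b) pre_digraph \<Rightarrow> 'b list \<Rightarrow> bool" where
  "exclusive_cycle G c \<longleftrightarrow> (\<forall>d. is_cycle G d \<and> cycle_verts G c \<inter> cycle_verts G d \<noteq> {}
       \<longrightarrow> (\<exists>k. d = rotate k c))"

definition condition_EXC :: "('a,'b) pre_digraph \<Rightarrow> bool" where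
  "condition_EXC G \<longleftrightarrow> (\<forall>c. is_cycle G c \<longrightarrow> exclusive_cycle G c)"

text \<open>Since paths form a basis of KE and V_n is spanned by
  paths of length <= n, dim (V_n / V_(n-1)) = card (paths_of_length G n).\<close>
definition paths_of_length :: "('a,'b) pre_digraph \<Rightarrow> nat \<Rightarrow> ('a + 'b list) set" where
  "paths_of_length G n =
     (if n = 0 then Inl ` verts G else Inr ` {es. length es = n \<and> is_epath G es})"

definition all_paths :: "('a,'b) pre_digraph \<Rightarrow> ('a + 'b list) set" where
  "all_paths G = (\<Union>n. paths_of_length G n)"

definition h_alg :: "('a,'b) pre_digraph \<Rightarrow> ereal" where
  "h_alg G = (if finite (all_paths G) then 0
     else limsup (\<lambda>n. ereal (ln (real (card (paths_of_length G n))) / real n)))"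

end

theory Submission
  imports Defs "Graph_Theory.Arc_Walk" "HOL-Library.FuncSet" "HOL-Real_Asymp.Real_Asymp"
begin

(* Under (EXC) distinct cycles are vertex-disjoint, so at most one arc lying on a cycle leaves
   any vertex.  A path never returns to the tail of an arc that lies on no cycle, so it leaves
   each vertex along such an arc at most once.  Hence a path of length n is determined by its
   first vertex and by the positions and arcs of its steps off the cycles, which leaves at most
   |E0| (n |E1| + 1)^|E0| paths of length n.  Polynomial growth forces zero entropy. *)

lemma is_epath_Cons:
  "is_epath G (e # es) \<longleftrightarrow>
     e \<in> arcs G \<and> (es = [] \<or> is_epath G es \<and> head G e = tail G (hd es))"
  by (cases es) (auto simp: is_epath_def nth_Cons split: nat.splits)

lemma (in wf_digraph) is_epath_iff_awalk:
  "is_epath G es \<longleftrightarrow> es \<noteq> [] \<and> awalk (tail G (hd es)) es (head G (last es))"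
proof (induction es)
  case Nil
  then show ?case by (simp add: is_epath_def)
next
  case (Cons e es)
  then show ?case
    by (cases es) (auto simp: is_epath_Cons awalk_Cons_iff awalk_Nil_iff)
qed

definition cycle_arcs :: "('a,'b) pre_digraph \<Rightarrow> 'b set" where
  "cycle_arcs G = {e. \<exists>c. is_cycle G c \<and> e \<in> set c}"

lemma (in wf_digraph) in_cycle_arcs_if_awalk_head_to_tail:
  assumes e: "e \<in> arcs G" and p: "awalk (head G e) p (tail G e)"
  shows "e \<in> cycle_arcs G"
proof -
  define q where "q = awalk_to_apath p"
  have q: "apath (head G e) q (tail G e)"
    unfolding q_def using p by (rule apath_awalk_to_apath)
  have "is_cycle G (e # q)"
  proof (cases "q = []")
    case True
    then show ?thesis using e q by (simp add: is_cycle_def is_epath_def apath_Nil_iff)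
  next
    case False
    have "awalk (tail G e) (e # q) (tail G e)" using e q by (simp add: awalk_Cons_iff apath_def)
    moreover have "distinct (map (tail G) q @ [tail G e])"
      using q False by (auto simp: apath_def awalk_verts_conv)
    ultimately show ?thesis
      using False q by (auto simp: is_cycle_def is_epath_iff_awalk apath_def awalk_verts_conv)
  qed
  then show ?thesis unfolding cycle_arcs_def by auto
qed

lemma (in wf_digraph) revisited_arc_in_cycle_arcs:
  assumes "awalk u (xs @ e # ys @ f # zs) v" "tail G f = tail G e"
  shows "e \<in> cycle_arcs G"
proof -
  have "e \<in> arcs G" and "awalk (head G e) ys (tail G f)"
    using assms(1) by (auto simp: awalk_Cons_iff)
  then show ?thesis
    unfolding assms(2) by (rule in_cycle_arcs_if_awalk_head_to_tail)
qed

lemma (in wf_digraph) revisited_nth_in_cycle_arcs: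
  assumes "is_epath G es" "i < j" "j < length es" "tail G (es ! j) = tail G (es ! i)"
  shows "es ! i \<in> cycle_arcs G"
proof -
  define ys where "ys = take (j - Suc i) (drop (Suc i) es)"
  have "drop (Suc i) es = ys @ drop (j - Suc i) (drop (Suc i) es)"
    unfolding ys_def by (rule append_take_drop_id[symmetric])
  also have "drop (j - Suc i) (drop (Suc i) es) = es ! j # drop (Suc j) es"
    using assms(2,3) by (simp add: Cons_nth_drop_Suc)
  finally have "drop (Suc i) es = ys @ es ! j # drop (Suc j) es" .
  then have "es = take i es @ es ! i # ys @ es ! j # drop (Suc j) es"
    using assms(2,3) id_take_nth_drop[of i es] by simp
  then show ?thesis
    using assms(1,4) revisited_arc_in_cycle_arcs unfolding is_epath_iff_awalk by metis
qed

lemma inj_on_tail_cycle_arcs: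
  assumes "condition_EXC G"
  shows "inj_on (tail G) (cycle_arcs G)"
proof (rule inj_onI)
  fix e f assume e: "e \<in> cycle_arcs G" and f: "f \<in> cycle_arcs G"
    and tails: "tail G e = tail G f"
  obtain c d where c: "is_cycle G c" "e \<in> set c" and d: "is_cycle G d" "f \<in> set d"
    using e f unfolding cycle_arcs_def by blast
  have "tail G e \<in> cycle_verts G c \<inter> cycle_verts G d"
    using c d tails unfolding cycle_verts_def by (metis IntI image_eqI set_map)
  then obtain k where "d = rotate k c"
    using assms c d unfolding condition_EXC_def exclusive_cycle_def by blast
  then have "f \<in> set c" using d by simp
  moreover have "inj_on (tail G) (set c)"
    using c(1) by (simp add: is_cycle_def distinct_map)
  ultimately show "e = f" using c tails by (meson inj_onD)
qed

lemma card_inj_on_subsets_le: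
  assumes "finite A" "finite B" "f ` A \<subseteq> B"
  shows "card {S. S \<subseteq> A \<and> inj_on f S} \<le> (card A + 1) ^ card B"
proof -
  let ?Inj = "{S. S \<subseteq> A \<and> inj_on f S}"
  let ?fibres = "\<lambda>S. \<lambda>b\<in>B. S \<inter> f -` {b}"
  let ?T = "insert {} ((\<lambda>a. {a}) ` A)"
  have "inj_on ?fibres ?Inj"
  proof (rule inj_onI)
    fix S S' assume "S \<in> ?Inj" "S' \<in> ?Inj" and eq: "?fibres S = ?fibres S'"
    have "x \<in> S \<longleftrightarrow> x \<in> S'" if "x \<in> A" for x
    proof -
      have "f x \<in> B" using that assms(3) by blast
      then have "S \<inter> f -` {f x} = S' \<inter> f -` {f x}" using fun_cong[OF eq, of "f x"] by simp
      then show ?thesis by blast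
    qed
    then show "S = S'" using \<open>S \<in> ?Inj\<close> \<open>S' \<in> ?Inj\<close> by blast
  qed
  moreover have "?fibres ` ?Inj \<subseteq> PiE B (\<lambda>_. ?T)"
  proof
    fix F assume "F \<in> ?fibres ` ?Inj"
    then obtain S where S: "S \<subseteq> A" "inj_on f S" and F: "F = ?fibres S" by blast
    have "S \<inter> f -` {b} \<in> ?T" for b
    proof (cases "S \<inter> f -` {b} = {}")
      case False
      then obtain x where x: "x \<in> S" "f x = b" by blast
      then have "S \<inter> f -` {b} = {x}" using S(2) by (auto simp: inj_on_def)
      then show ?thesis using x S(1) by auto
    qed simp
    then show "F \<in> PiE B (\<lambda>_. ?T)" using F by auto
  qed
  moreover have "finite (PiE B (\<lambda>_. ?T))" using assms(1,2) by (simp add: finite_PiE)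
  ultimately have "card ?Inj \<le> card (PiE B (\<lambda>_. ?T))" by (rule card_inj_on_le)
  also have "\<dots> = (card A + 1) ^ card B"
  proof -
    have "card ?T = card A + 1"
      using assms(1) by (subst card_insert_disjoint) (auto simp: card_image)
    then show ?thesis using assms(2) by (simp add: card_PiE)
  qed
  finally show ?thesis .
qed

definition noncycle_steps :: "('a,'b) pre_digraph \<Rightarrow> 'b list \<Rightarrow> (nat \<times> 'b) set" where
  "noncycle_steps G es = {(i, es ! i) | i. i < length es \<and> es ! i \<notin> cycle_arcs G}"

lemma is_epath_eqI:
  assumes exc: "condition_EXC G" and p: "is_epath G es" and p': "is_epath G es'"
    and len: "length es = length es'" and start: "tail G (hd es) = tail G (hd es')"
    and steps: "noncycle_steps G es = noncycle_steps G es'"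
  shows "es = es'"
proof -
  have step: "es ! i = es' ! i" if i: "i < length es" and "tail G (es ! i) = tail G (es' ! i)" for i
  proof (cases "es ! i \<in> cycle_arcs G \<and> es' ! i \<in> cycle_arcs G")
    case True
    then show ?thesis using inj_onD[OF inj_on_tail_cycle_arcs[OF exc] that(2)] by blast
  next
    case False
    then have "(i, es ! i) \<in> noncycle_steps G es' \<or> (i, es' ! i) \<in> noncycle_steps G es"
      using i len steps unfolding noncycle_steps_def by auto
    then show ?thesis unfolding noncycle_steps_def by auto
  qed
  have "es ! i = es' ! i" if "i < length es" for i
    using that
  proof (induction i)
    case 0
    then show ?case using step p p' start by (simp add: hd_conv_nth is_epath_def)
  next
    case (Suc i)
    then have "head G (es ! i) = head G (es' ! i)" by simp
    then have "tail G (es ! Suc i) = tail G (es' ! Suc i)"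
      using p p' Suc.prems len by (simp add: is_epath_def)
    then show ?case using step Suc.prems by blast
  qed
  then show ?thesis using len by (simp add: nth_equalityI)
qed

lemma (in wf_digraph) inj_on_tail_noncycle_steps:
  assumes "is_epath G es"
  shows "inj_on (tail G \<circ> snd) (noncycle_steps G es)"
proof (rule inj_onI)
  fix x y assume "x \<in> noncycle_steps G es" "y \<in> noncycle_steps G es"
    and tails: "(tail G \<circ> snd) x = (tail G \<circ> snd) y"
  then obtain i j where x: "x = (i, es ! i)" "i < length es" "es ! i \<notin> cycle_arcs G"
    and y: "y = (j, es ! j)" "j < length es" "es ! j \<notin> cycle_arcs G"
    unfolding noncycle_steps_def by blast
  have "i = j"
    using revisited_nth_in_cycle_arcs[OF assms, of i j] revisited_nth_in_cycle_arcs[OF assms, of j i]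
      x y tails by (metis comp_apply linorder_cases snd_conv)
  then show "x = y" using x y by simp
qed

lemma (in fin_digraph) card_epaths_le:
  assumes "condition_EXC G"
  shows "card {es. length es = n \<and> is_epath G es}
           \<le> card (verts G) * (n * card (arcs G) + 1) ^ card (verts G)"
proof -
  let ?P = "{es. length es = n \<and> is_epath G es}"
  let ?code = "\<lambda>es. (tail G (hd es), noncycle_steps G es)"
  let ?Steps = "{S. S \<subseteq> {0..<n} \<times> arcs G \<and> inj_on (tail G \<circ> snd) S}"
  have "inj_on ?code ?P"
    by (auto intro!: inj_onI is_epath_eqI[OF assms])
  moreover have "?code ` ?P \<subseteq> verts G \<times> ?Steps"
  proof (rule image_subsetI)
    fix es assume "es \<in> ?P"
    then have p: "is_epath G es" and len: "length es = n" by auto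
    have "hd es \<in> arcs G" using p hd_in_set[of es] by (auto simp: is_epath_def)
    moreover have "noncycle_steps G es \<subseteq> {0..<n} \<times> arcs G"
      using p len by (auto simp: is_epath_def noncycle_steps_def)
    ultimately show "?code es \<in> verts G \<times> ?Steps"
      using inj_on_tail_noncycle_steps[OF p] by simp
  qed
  moreover have "finite (verts G \<times> ?Steps)" by simp
  ultimately have "card ?P \<le> card (verts G \<times> ?Steps)" by (rule card_inj_on_le)
  also have "\<dots> \<le> card (verts G) * (n * card (arcs G) + 1) ^ card (verts G)"
  proof -
    have "(tail G \<circ> snd) ` ({0..<n} \<times> arcs G) \<subseteq> verts G" by auto
    from card_inj_on_subsets_le[OF _ _ this] show ?thesis
      by (simp add: card_cartesian_product)
  qed
  finally show ?thesis .
qed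

lemma limsup_ln_div_eq_0_if_poly_bounded:
  fixes a :: "nat \<Rightarrow> nat"
  assumes "\<forall>\<^sub>F n in sequentially. a n \<le> c * (n + 1) ^ k"
  shows "limsup (\<lambda>n. ereal (ln (real (a n)) / real n)) = 0"
proof -
  let ?bound = "\<lambda>n. ln (real (c + 1) * (real n + 1) ^ k) / real n"
  have "?bound \<longlonglongrightarrow> 0" by real_asymp
  have "(\<lambda>n. ln (real (a n)) / real n) \<longlonglongrightarrow> 0"
  proof (rule tendsto_sandwich[OF _ _ tendsto_const \<open>?bound \<longlonglongrightarrow> 0\<close>])
    show "\<forall>\<^sub>F n in sequentially. 0 \<le> ln (real (a n)) / real n"
    proof (intro always_eventually allI)
      fix n
      have "0 \<le> ln (real (a n))" by (cases "a n = 0") auto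
      then show "0 \<le> ln (real (a n)) / real n" by simp
    qed
    show "\<forall>\<^sub>F n in sequentially. ln (real (a n)) / real n \<le> ?bound n"
      using assms
    proof eventually_elim
      case (elim n)
      have "real (a n) \<le> real c * (real n + 1) ^ k"
        using elim by (metis of_nat_1 of_nat_add of_nat_le_iff of_nat_mult of_nat_power)
      also have "\<dots> \<le> real (c + 1) * (real n + 1) ^ k"
        by (intro mult_right_mono) auto
      finally have "real (a n) \<le> real (c + 1) * (real n + 1) ^ k" .
      moreover have "1 \<le> real (c + 1) * (real n + 1) ^ k"
        using mult_mono[of 1 "real (c + 1)" 1 "(real n + 1) ^ k"] by simp
      ultimately have "ln (real (a n)) \<le> ln (real (c + 1) * (real n + 1) ^ k)"
        by (cases "a n = 0") auto
      then show ?case by (simp add: divide_right_mono)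
    qed
  qed
  then show ?thesis
    by (simp add: lim_imp_Limsup tendsto_ereal zero_ereal_def)
qed

theorem lemma5p12:
  fixes G :: "('a,'b) pre_digraph"
  assumes "fin_digraph G"
    and "condition_EXC G"
    and "\<forall>v \<in> verts G. \<not> is_source G v"
    and "\<forall>v \<in> verts G. \<not> is_sink G v"
  shows "h_alg G = 0"
proof -
  interpret fin_digraph G by (rule assms(1))
  let ?V = "card (verts G)" and ?E = "card (arcs G)"
  have bound: "card (paths_of_length G n) \<le> ?V * (?E + 1) ^ ?V * (n + 1) ^ ?V" if "n > 0" for n
  proof -
    have "card (paths_of_length G n) = card {es. length es = n \<and> is_epath G es}"
      using that by (simp add: paths_of_length_def card_image)
    also have "\<dots> \<le> ?V * (n * ?E + 1) ^ ?V"
      by (rule card_epaths_le[OF assms(2)])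
    also have "\<dots> \<le> ?V * ((?E + 1) * (n + 1)) ^ ?V"
      by (intro mult_left_mono power_mono) (auto simp: algebra_simps)
    also have "\<dots> = ?V * (?E + 1) ^ ?V * (n + 1) ^ ?V"
      by (simp only: power_mult_distrib mult.assoc)
    finally show ?thesis .
  qed
  have "\<forall>\<^sub>F n in sequentially. card (paths_of_length G n) \<le> ?V * (?E + 1) ^ ?V * (n + 1) ^ ?V"
    using bound by (intro eventually_sequentiallyI[of 1]) simp
  then have "limsup (\<lambda>n. ereal (ln (real (card (paths_of_length G n))) / real n)) = 0"
    by (rule limsup_ln_div_eq_0_if_poly_bounded)
  then show ?thesis by (simp add: h_alg_def)
qed

end
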